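(* For every integer $s\ge1$, $$\sum_{n=1}^{s}\frac{E_{2n}}{2^{2n}}\,t(2s,2n)=t(2s+1,1)=\frac{(2s)!}{2^{2s}}\binom{-1/2}{s}=(-1)^s\Big(\frac{1\cdot3\cdots(2s-1)}{2^s}\Big)^2 .$$ Equivalently, $\operatorname{sech}(D/2)\,0^{[2s]}=D\,0^{[2s+1]}$.
   Context: $E_{2n}$ are the Euler numbers: $\operatorname{sech}x=\sum_{n\ge0}E_{2n}x^{2n}/(2n)!$. Central factorials: $x^{[0]}=1$, $x^{[n]}=x\prod_{j=1}^{n-1}(x+\tfrac n2-j)$ for $n\ge1$; $t(n,k)$ is defined by $x^{[n]}=\sum_k t(n,k)x^k$. For a power series $h(D)=\sum_k h_kD^k$, $h(D)\,0^{[n]}:=\sum_k h_k\,k!\,t(n,k)$. *)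

theory Defs
  imports Complex_Main "HOL-Computational_Algebra.Formal_Power_Series"
    "HOL-Computational_Algebra.Polynomial"
begin

definition fps_cosh :: "real \<Rightarrow> real fps" where
  "fps_cosh c = Abs_fps (\<lambda>n. if even n then c ^ n / fact n else 0)"

definition fps_sech :: "real fps" where
  "fps_sech = inverse (fps_cosh 1)"

definition euler_number :: "nat \<Rightarrow> real" where
  "euler_number m = fact m * fps_nth fps_sech m"

definition central_fact_poly :: "nat \<Rightarrow> real poly" where
  "central_fact_poly n = (if n = 0 then 1
     else [:0, 1:] * (\<Prod>j = 1..n - 1. [: real n / 2 - real j, 1 :]))"

definition central_t :: "nat \<Rightarrow> nat \<Rightarrow> real" where
  "central_t n k = coeff (central_fact_poly n) k"

text \<open>h(D) 0^[n] := sum_k h_k k! t(n,k)  (t(n,k) = 0 for k > n, so the sum is finite).\<close>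
definition apply_at_zero :: "real fps \<Rightarrow> nat \<Rightarrow> real" where
  "apply_at_zero h n = (\<Sum>k\<le>n. fps_nth h k * fact k * central_t n k)"

end

(*
  Write x^[2s+1] = x u(x) with u(x) = prod_{i=1..s} (x^2 - (i - 1/2)^2).  Splitting the roots of
  x^[2s] shows x^[2s] = (u(x + 1/2) + u(x - 1/2)) / 2.  The functional p \<mapsto> (h(D) p)(0) turns
  translation by c into multiplication of h by e^{cD}, so sech(D/2) applied to x^[2s] and
  evaluated at 0 gives (sech(D/2) cosh(D/2) u)(0) = u(0) = t(2s+1, 1).  Since sech is even, only
  the Euler numbers E_{2n} contribute.  The closed forms come from
  u(0) = prod_i -(i - 1/2)^2 = (-1)^s ((1/2)_s)^2 and the duplication formula for (2s)!.
*)
theory Submission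
  imports Defs
begin

unbundle fps_syntax

lemma sum_atMost_double_even:
  fixes f :: "nat \<Rightarrow> 'a::comm_monoid_add"
  assumes "\<And>k. odd k \<Longrightarrow> f k = 0"
  shows "(\<Sum>k\<le>2 * s. f k) = f 0 + (\<Sum>n = 1..s. f (2 * n))"
proof (induction s)
  case (Suc s)
  have "(\<Sum>k\<le>2 * Suc s. f k) = (\<Sum>k\<le>2 * s. f k) + f (Suc (2 * s)) + f (2 * Suc s)"
    by (simp add: add.assoc)
  then show ?case
    using Suc assms by (simp add: add.assoc)
qed simp

lemma pochhammer_conv_prod_Icc: "pochhammer (a :: 'a::comm_ring_1) n = (\<Prod>i = 1..n. a + of_nat i - 1)"
  by (induction n) (simp_all add: pochhammer_Suc)

lemma pochhammer_half: "pochhammer (1/2 :: real) s = (\<Prod>i = 1..s. real (2 * i - 1)) / 2 ^ s"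
proof -
  have "pochhammer (1/2 :: real) s = (\<Prod>i = 1..s. real (2 * i - 1) / 2)"
    unfolding pochhammer_conv_prod_Icc by (rule prod.cong) auto
  then show ?thesis by (simp add: prod_dividef)
qed

lemma gbinomial_minus_half:
  "fact (2 * s) / 2 ^ (2 * s) * ((-1/2 :: 'a::field_char_0) gchoose s) = (-1) ^ s * pochhammer (1/2) s ^ 2"
  by (simp add: fact_double gbinomial_pochhammer power2_eq_square)

lemma pcompose_monom: "pcompose (monom a j) q = smult a (q ^ j)"
  by (induction j) (simp_all add: monom_0 monom_Suc pcompose_pCons)

lemma coeff_linear_power:
  "coeff ([:c, 1:] ^ j) k = of_nat (j choose k) * (c :: 'a::comm_semiring_1) ^ (j - k)"
proof -
  have "[:c, 1:] = monom 1 1 + [:c:]"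
    by (simp add: poly_eq_iff coeff_pCons split: nat.split)
  then have "[:c, 1:] ^ j = (\<Sum>i\<le>j. of_nat (j choose i) * monom 1 1 ^ i * [:c:] ^ (j - i))"
    by (simp add: binomial_ring)
  also have "\<dots> = (\<Sum>i\<le>j. monom (of_nat (j choose i) * c ^ (j - i)) i)"
    by (rule sum.cong) (simp_all add: monom_power of_nat_poly smult_monom[symmetric]
        poly_const_pow monom_0[symmetric] mult_monom)
  finally show ?thesis by (simp add: coeff_sum binomial_eq_0)
qed

lemma linear_poly_mult_conj: "[:a, 1:] * [:- a, 1:] = [:- a\<^sup>2, 0, 1 :: 'a::comm_ring_1:]"
  by (simp add: power2_eq_square)

lemma fps_inverse_nth_odd_eq_0:
  fixes f :: "'a::field_char_0 fps"
  assumes f_even: "\<And>k. odd k \<Longrightarrow> f $ k = 0" and "f $ 0 \<noteq> 0" and "odd n"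
  shows "inverse f $ n = 0"
proof -
  have "f oo -fps_X = f"
    using f_even by (auto simp: fps_compose_uminus' fps_eq_iff) (metis neg_one_even_power)
  then have "inverse f oo -fps_X = inverse f"
    using \<open>f $ 0 \<noteq> 0\<close> by (simp add: fps_inverse_compose)
  then have "(-1) ^ n * inverse f $ n = inverse f $ n"
    by (metis fps_compose_uminus' fps_nth_Abs_fps)
  with \<open>odd n\<close> show ?thesis by simp
qed

lemma fps_cosh_nth_0 [simp]: "fps_cosh c $ 0 = 1"
  by (simp add: fps_cosh_def)

lemma fps_cosh_conv_fps_exp: "fps_cosh c = fps_const (1/2) * (fps_exp c + fps_exp (-c))"
  by (auto simp: fps_eq_iff fps_cosh_def power_minus' add_divide_distrib[symmetric])

lemma inverse_fps_cosh_nth: "inverse (fps_cosh c) $ n = c ^ n * fps_sech $ n"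
proof -
  have "fps_cosh c = fps_cosh 1 oo (fps_const c * fps_X)"
    by (simp add: fps_compose_linear fps_cosh_def fps_eq_iff)
  then have "inverse (fps_cosh c) = fps_sech oo (fps_const c * fps_X)"
    by (simp add: fps_sech_def fps_inverse_compose)
  then show ?thesis by (simp add: fps_compose_linear)
qed

lemma inverse_fps_cosh_nth_odd: "odd n \<Longrightarrow> inverse (fps_cosh c) $ n = 0"
  by (rule fps_inverse_nth_odd_eq_0) (simp_all add: fps_cosh_def)

(* (h(D) p)(0), so that apply_at_zero h n is this functional applied to x^[n]. *)
definition diff_op_at_0 :: "'a::field_char_0 fps \<Rightarrow> 'a poly \<Rightarrow> 'a" where
  "diff_op_at_0 h p = (\<Sum>k\<le>degree p. h $ k * fact k * coeff p k)"

lemma diff_op_at_0_conv_sum: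
  assumes "degree p \<le> N"
  shows "diff_op_at_0 h p = (\<Sum>k\<le>N. h $ k * fact k * coeff p k)"
  unfolding diff_op_at_0_def
  by (rule sum.mono_neutral_left) (use assms in \<open>auto simp: coeff_eq_0\<close>)

lemma diff_op_at_0_add: "diff_op_at_0 h (p + q) = diff_op_at_0 h p + diff_op_at_0 h q"
proof -
  define N where "N = max (degree p) (degree q)"
  have "degree (p + q) \<le> N" "degree p \<le> N" "degree q \<le> N"
    by (simp_all add: N_def degree_add_le)
  then show ?thesis
    by (simp add: diff_op_at_0_conv_sum algebra_simps sum.distrib)
qed

lemma diff_op_at_0_smult: "diff_op_at_0 h (smult a p) = a * diff_op_at_0 h p"
  by (simp add: diff_op_at_0_def sum_distrib_left mult_ac)

lemma diff_op_at_0_0 [simp]: "diff_op_at_0 h 0 = 0"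
  by (simp add: diff_op_at_0_def)

lemma diff_op_at_0_sum: "diff_op_at_0 h (\<Sum>j\<in>A. f j) = (\<Sum>j\<in>A. diff_op_at_0 h (f j))"
  by (induction A rule: infinite_finite_induct) (simp_all add: diff_op_at_0_add)

lemma diff_op_at_0_monom: "diff_op_at_0 h (monom a j) = a * h $ j * fact j"
  by (simp add: diff_op_at_0_conv_sum[of _ j] degree_monom_le mult_delta_right)

lemma diff_op_at_0_fps_add: "diff_op_at_0 (g + h) p = diff_op_at_0 g p + diff_op_at_0 h p"
  by (simp add: diff_op_at_0_def algebra_simps sum.distrib)

lemma diff_op_at_0_fps_const_mult: "diff_op_at_0 (fps_const c * h) p = c * diff_op_at_0 h p"
  by (simp add: diff_op_at_0_def sum_distrib_left mult_ac)

lemma diff_op_at_0_one: "diff_op_at_0 1 p = coeff p 0"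
  by (simp add: diff_op_at_0_def sum.atMost_shift)

lemma diff_op_at_0_fps_X: "diff_op_at_0 fps_X p = coeff p 1"
  by (simp add: diff_op_at_0_conv_sum[of _ "Suc (degree p)"] mult_delta_left)

lemma diff_op_at_0_linear_power: "diff_op_at_0 h ([:c, 1:] ^ j) = (h * fps_exp c) $ j * fact j"
proof -
  have "diff_op_at_0 h ([:c, 1:] ^ j) = (\<Sum>k\<le>j. h $ k * fact k * (of_nat (j choose k) * c ^ (j - k)))"
    by (simp add: diff_op_at_0_def degree_linear_power coeff_linear_power)
  also have "\<dots> = (\<Sum>k\<le>j. fact j * (h $ k * (c ^ (j - k) / fact (j - k))))"
    by (rule sum.cong) (auto simp: binomial_fact field_simps)
  also have "\<dots> = (h * fps_exp c) $ j * fact j"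
    by (simp add: fps_mult_nth sum_distrib_left atLeast0AtMost mult_ac)
  finally show ?thesis .
qed

(* Taylor: translation by c acts as the operator e^{cD}. *)
lemma diff_op_at_0_pcompose_shift: "diff_op_at_0 h (pcompose p [:c, 1:]) = diff_op_at_0 (h * fps_exp c) p"
proof -
  have "diff_op_at_0 h (pcompose p [:c, 1:])
      = (\<Sum>j\<le>degree p. coeff p j * diff_op_at_0 h ([:c, 1:] ^ j))"
    by (subst (1) poly_as_sum_of_monoms[symmetric])
       (simp add: pcompose_sum pcompose_monom diff_op_at_0_sum diff_op_at_0_smult)
  also have "\<dots> = (\<Sum>j\<le>degree p. diff_op_at_0 (h * fps_exp c) (monom (coeff p j) j))"
    by (simp add: diff_op_at_0_linear_power diff_op_at_0_monom mult_ac)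
  also have "\<dots> = diff_op_at_0 (h * fps_exp c) p"
    by (simp add: diff_op_at_0_sum[symmetric] poly_as_sum_of_monoms)
  finally show ?thesis .
qed

definition prod_plus_poly :: "nat \<Rightarrow> real poly" where
  "prod_plus_poly m = (\<Prod>i = 1..m. [:real i, 1:])"

definition prod_minus_poly :: "nat \<Rightarrow> real poly" where
  "prod_minus_poly m = (\<Prod>i = 1..m. [:- real i, 1:])"

definition odd_cofactor :: "nat \<Rightarrow> real poly" where
  "odd_cofactor s = (\<Prod>i = 1..s. [:- (real i - 1/2)\<^sup>2, 0, 1:])"

lemma central_fact_poly_Suc:
  "central_fact_poly (Suc n) = [:0, 1:] * (\<Prod>j = 1..n. [:real (Suc n) / 2 - real j, 1:])"
  by (simp add: central_fact_poly_def)

lemma central_fact_poly_even: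
  "central_fact_poly (2 * Suc m) = [:0, 1:]\<^sup>2 * prod_plus_poly m * prod_minus_poly m"
proof -
  let ?f = "\<lambda>j. [:real (2 * Suc m) / 2 - real j, 1:]"
  have split: "{1..Suc (2 * m)} = {1..m} \<union> {Suc m} \<union> {m + 2..2 * m + 1}" by auto
  have "prod ?f {1..Suc (2 * m)} = prod ?f {1..m} * ?f (Suc m) * prod ?f {m + 2..2 * m + 1}"
    unfolding split by (subst prod.union_disjoint; auto)+
  also have "prod ?f {1..m} = prod_plus_poly m"
    unfolding prod_plus_poly_def
    by (rule prod.reindex_bij_witness[of _ "\<lambda>i. Suc m - i" "\<lambda>j. Suc m - j"]) auto
  also have "prod ?f {m + 2..2 * m + 1} = prod_minus_poly m"
    unfolding prod_minus_poly_def
    by (rule prod.reindex_bij_witness[of _ "\<lambda>i. i + Suc m" "\<lambda>j. j - Suc m"]) auto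
  also have "?f (Suc m) = [:0, 1:]" by simp
  finally have "prod ?f {1..Suc (2 * m)} = prod_plus_poly m * [:0, 1:] * prod_minus_poly m" .
  moreover have "central_fact_poly (2 * Suc m) = [:0, 1:] * prod ?f {1..Suc (2 * m)}"
    unfolding mult_2 add_Suc_right add_Suc by (rule central_fact_poly_Suc)
  ultimately show ?thesis by (simp only: power2_eq_square mult_ac)
qed

lemma central_fact_poly_odd: "central_fact_poly (2 * s + 1) = [:0, 1:] * odd_cofactor s"
proof -
  let ?f = "\<lambda>j. [:real (2 * s + 1) / 2 - real j, 1:]"
  have split: "{1..2 * s} = {1..s} \<union> {s + 1..2 * s}" by auto
  have "prod ?f {1..2 * s} = prod ?f {1..s} * prod ?f {s + 1..2 * s}"
    unfolding split by (subst prod.union_disjoint) auto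
  also have "prod ?f {1..s} = (\<Prod>i = 1..s. [:real i - 1/2, 1:])"
    by (rule prod.reindex_bij_witness[of _ "\<lambda>i. Suc s - i" "\<lambda>j. Suc s - j"])
      (auto simp: field_simps)
  also have "prod ?f {s + 1..2 * s} = (\<Prod>i = 1..s. [:- (real i - 1/2), 1:])"
    by (rule prod.reindex_bij_witness[of _ "\<lambda>i. i + s" "\<lambda>j. j - s"])
      (auto simp: field_simps)
  finally have "prod ?f {1..2 * s} = odd_cofactor s"
    by (simp only: prod.distrib[symmetric] linear_poly_mult_conj odd_cofactor_def)
  then show ?thesis
    using central_fact_poly_Suc[of "2 * s"] by simp
qed

lemma central_fact_poly_even_conv_odd_cofactor_Suc:
  "central_fact_poly (2 * Suc m) = smult (1/2)
     (pcompose (odd_cofactor (Suc m)) [:1/2, 1:] + pcompose (odd_cofactor (Suc m)) [:-1/2, 1:])"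
proof -
  have plus: "pcompose [:- (real i - 1/2)\<^sup>2, 0, 1:] [:1/2, 1:] = [:real i, 1:] * [:1 - real i, 1:]" for i
    by (rule poly_ext) (simp add: poly_pcompose power2_eq_square field_simps)
  have minus: "pcompose [:- (real i - 1/2)\<^sup>2, 0, 1:] [:-1/2, 1:] = [:- real i, 1:] * [:real i - 1, 1:]" for i
    by (rule poly_ext) (simp add: poly_pcompose power2_eq_square field_simps)
  have top: "(\<Prod>i = 1..Suc m. f i) = f (Suc m) * (\<Prod>i = 1..m. f i)" for f :: "nat \<Rightarrow> real poly"
    by (simp add: mult.commute)
  have bottom: "(\<Prod>i = 1..Suc m. f i) = f 1 * (\<Prod>i = 1..m. f (Suc i))" for f :: "nat \<Rightarrow> real poly"
    by (simp add: prod.atLeast_Suc_atMost prod.shift_bounds_cl_Suc_ivl del: prod.cl_ivl_Suc)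
  let ?P = "prod_plus_poly m" and ?M = "prod_minus_poly m"
  have "(\<Prod>i = 1..Suc m. [:real i, 1:]) = [:real (Suc m), 1:] * ?P"
    and "(\<Prod>i = 1..Suc m. [:- real i, 1:]) = [:- real (Suc m), 1:] * ?M"
    unfolding prod_plus_poly_def prod_minus_poly_def by (rule top)+
  moreover have "(\<Prod>i = 1..Suc m. [:1 - real i, 1:]) = [:0, 1:] * ?M"
    and "(\<Prod>i = 1..Suc m. [:real i - 1, 1:]) = [:0, 1:] * ?P"
    unfolding prod_plus_poly_def prod_minus_poly_def by (subst bottom; simp)+
  ultimately have
    "pcompose (odd_cofactor (Suc m)) [:1/2, 1:] = ([:real (Suc m), 1:] * ?P) * ([:0, 1:] * ?M)"
    "pcompose (odd_cofactor (Suc m)) [:-1/2, 1:] = ([:- real (Suc m), 1:] * ?M) * ([:0, 1:] * ?P)"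
    unfolding odd_cofactor_def pcompose_prod plus minus prod.distrib by simp_all
  moreover have "([:real (Suc m), 1:] * ?P) * ([:0, 1:] * ?M) + ([:- real (Suc m), 1:] * ?M) * ([:0, 1:] * ?P)
      = ([:real (Suc m), 1:] + [:- real (Suc m), 1:]) * ([:0, 1:] * ?P * ?M)"
    by (simp only: distrib_left distrib_right mult_ac)
  moreover have "[:real (Suc m), 1:] + [:- real (Suc m), 1:] = smult 2 [:0, 1:]" by simp
  ultimately show ?thesis
    unfolding central_fact_poly_even by (simp add: power2_eq_square mult_ac)
qed

lemma central_fact_poly_even_conv_odd_cofactor:
  "central_fact_poly (2 * s) = smult (1/2)
     (pcompose (odd_cofactor s) [:1/2, 1:] + pcompose (odd_cofactor s) [:-1/2, 1:])"
proof (cases s)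
  case 0
  then show ?thesis
    unfolding central_fact_poly_def odd_cofactor_def
    by (simp only: prod.empty pcompose_1 smult_add_right smult_one) (simp add: one_pCons)
qed (simp only: central_fact_poly_even_conv_odd_cofactor_Suc)

lemma degree_central_fact_poly: "degree (central_fact_poly n) \<le> n"
proof (cases n)
  case (Suc k)
  have "degree (\<Prod>j = 1..k. [:real (Suc k) / 2 - real j, 1:]) \<le> k"
    using degree_prod_sum_le[of "{1..k}" "\<lambda>j. [:real (Suc k) / 2 - real j, 1:]"] by simp
  then show ?thesis
    using Suc degree_mult_le[of "[:0, 1:]"] by (auto simp: central_fact_poly_Suc)
qed (simp add: central_fact_poly_def)

lemma central_t_0: "0 < n \<Longrightarrow> central_t n 0 = 0"
  by (cases n) (simp_all add: central_t_def central_fact_poly_Suc)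

lemma central_t_odd_1: "central_t (2 * s + 1) 1 = (-1) ^ s * pochhammer (1/2) s ^ 2"
proof -
  have "central_t (2 * s + 1) 1 = poly (odd_cofactor s) 0"
    unfolding central_t_def central_fact_poly_odd by (simp add: poly_0_coeff_0)
  also have "\<dots> = (\<Prod>i = 1..s. - (real i - 1/2)\<^sup>2)"
    by (simp add: odd_cofactor_def poly_prod)
  also have "\<dots> = (\<Prod>i = 1..s. -1 * (real i - 1/2)\<^sup>2)"
    by simp
  also have "\<dots> = (-1) ^ s * pochhammer (1/2) s ^ 2"
    by (simp only: prod.distrib prod_power_distrib pochhammer_conv_prod_Icc) simp
  finally show ?thesis .
qed

lemma apply_at_zero_conv_diff_op_at_0:
  "apply_at_zero h n = diff_op_at_0 h (central_fact_poly n)"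
  by (simp add: apply_at_zero_def central_t_def diff_op_at_0_conv_sum[OF degree_central_fact_poly])

lemma apply_at_zero_fps_X: "apply_at_zero fps_X n = central_t n 1"
  by (simp add: apply_at_zero_conv_diff_op_at_0 diff_op_at_0_fps_X central_t_def)

lemma apply_at_zero_sech_half_even:
  "apply_at_zero (inverse (fps_cosh (1/2))) (2 * s) = central_t (2 * s + 1) 1"
proof -
  let ?h = "inverse (fps_cosh (1/2))"
  let ?u = "odd_cofactor s"
  have "apply_at_zero ?h (2 * s)
      = 1/2 * (diff_op_at_0 (?h * fps_exp (1/2)) ?u + diff_op_at_0 (?h * fps_exp (-1/2)) ?u)"
    unfolding apply_at_zero_conv_diff_op_at_0 central_fact_poly_even_conv_odd_cofactor
    by (simp add: diff_op_at_0_smult diff_op_at_0_add diff_op_at_0_pcompose_shift)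
  also have "\<dots> = diff_op_at_0 (?h * fps_cosh (1/2)) ?u"
    by (simp add: fps_cosh_conv_fps_exp algebra_simps diff_op_at_0_fps_add diff_op_at_0_fps_const_mult)
  also have "?h * fps_cosh (1/2) = 1"
    by (simp add: inverse_mult_eq_1)
  also have "diff_op_at_0 1 ?u = central_t (2 * s + 1) 1"
    unfolding diff_op_at_0_one central_t_def central_fact_poly_odd by simp
  finally show ?thesis .
qed

theorem mainTheorem6:
  fixes s :: nat
  assumes "s \<ge> 1"
  shows "(\<Sum>n = 1..s. euler_number (2*n) / 2^(2*n) * central_t (2*s) (2*n)) = central_t (2*s+1) 1
     \<and> central_t (2*s+1) 1 = fact (2*s) / 2^(2*s) * ((-1/2 :: real) gchoose s)
     \<and> fact (2*s) / 2^(2*s) * ((-1/2 :: real) gchoose s)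
         = (-1)^s * ((\<Prod>i = 1..s. real (2*i - 1)) / 2^s)^2
     \<and> apply_at_zero (inverse (fps_cosh (1/2))) (2*s) = apply_at_zero fps_X (2*s+1)"
proof -
  let ?h = "inverse (fps_cosh (1/2))"
  have euler_scaled: "euler_number (2 * n) / 2 ^ (2 * n) = ?h $ (2 * n) * fact (2 * n)" for n
    by (simp add: euler_number_def inverse_fps_cosh_nth power_divide)
  have "(\<Sum>n = 1..s. euler_number (2*n) / 2^(2*n) * central_t (2*s) (2*n))
      = (\<Sum>k\<le>2 * s. ?h $ k * fact k * central_t (2 * s) k)"
    using assms by (simp add: sum_atMost_double_even inverse_fps_cosh_nth_odd central_t_0 euler_scaled)
  also have "\<dots> = apply_at_zero ?h (2 * s)"
    by (simp add: apply_at_zero_def)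
  also note apply_at_zero_sech_half_even
  finally show ?thesis
    using apply_at_zero_sech_half_even
    by (simp only: central_t_odd_1 gbinomial_minus_half pochhammer_half apply_at_zero_fps_X)
qed

end
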